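(* Let $\mathcal F$ be a $k$-uniform hypergraph on $n$ vertices with $|\mathcal F|=n^r$ edges, $r\ge1$, and let $\alpha\in(0,1]$. Suppose $\wp(\mathcal F,\alpha n)\le\min\{Bn,\ \tfrac12|\mathcal F|\}$ for some real $B>0$. Then for every $0<\gamma\le1$ with $k\le\sqrt{\gamma n}$, the expected value of $|\mathcal F_I|$, where $I$ is a uniformly random subset of the vertex set of size $\gamma n$, is at least $$\frac{1}{C'}\cdot\frac{|\mathcal F|}{B^{1-\log_2(1+\gamma)}},\qquad C'=(8k/(\alpha\gamma))^{\lceil 5r\rceil}\log_2 n.$$
   Context: For a hypergraph $\mathcal F$ and vertex set $I$, the trace is $\mathcal F_I=\{e\cap I:e\in\mathcal F\}$, the induced sub-hypergraph is $\mathcal F[I]=\{e\in\mathcal F:e\subseteq I\}$, and $\wp(\mathcal F,i)=\max_{|I|=i}|\mathcal F[I]|$. Quantities $\alpha n,\gamma n$ are rounded to integers; $n$ is assumed sufficiently large. *)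

theory Defs
  imports Complex_Main
begin

definition trace :: "'a set set \<Rightarrow> 'a set \<Rightarrow> 'a set set" where
  "trace F I = (\<lambda>e. e \<inter> I) ` F"

definition induced :: "'a set set \<Rightarrow> 'a set \<Rightarrow> 'a set set" where
  "induced F I = {e \<in> F. e \<subseteq> I}"

definition wp :: "'a set set \<Rightarrow> 'a set \<Rightarrow> nat \<Rightarrow> nat" where
  "wp F V i = Max {card (induced F I) | I. I \<subseteq> V \<and> card I = i}"

definition uniform_hypergraph :: "nat \<Rightarrow> 'a set \<Rightarrow> 'a set set \<Rightarrow> bool" where
  "uniform_hypergraph k V F \<longleftrightarrow> (\<forall>e\<in>F. e \<subseteq> V \<and> card e = k)"

definition rnd :: "real \<Rightarrow> nat" where
  "rnd x = nat (round x)"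

definition expected_trace :: "'a set set \<Rightarrow> 'a set \<Rightarrow> nat \<Rightarrow> real" where
  "expected_trace F V s =
     (\<Sum>I\<in>{I. I \<subseteq> V \<and> card I = s}. real (card (trace F I)))
       / real (card {I. I \<subseteq> V \<and> card I = s})"

end

theory Submission
  imports Defs
begin

text \<open>
  The expected trace is bounded from below in two ways. An edge inside the random set \<open>I\<close> is
  its own trace, and a fixed edge lies in \<open>I\<close> with probability at least \<open>(\<gamma>/2k)^k\<close>, so
  \<open>E |F_I| \<ge> |F| (\<gamma>/2k)^k\<close>; the same averaging over \<open>\<alpha>n\<close>-sets gives
  \<open>wp(F, \<alpha>n) \<ge> |F| (\<alpha>/2k)^k\<close>, hence \<open>B \<ge> n^(r-1) (\<alpha>/2k)^k\<close>. Secondly,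
  \<open>wp(F, \<alpha>n) \<le> |F|/2\<close> forces the edges to cover more than \<open>\<alpha>n\<close> vertices; a covered vertex \<open>v\<close>,
  with a chosen edge \<open>e \<ni> v\<close>, contributes the singleton \<open>{v}\<close> to \<open>F_I\<close> whenever \<open>I\<close> meets
  \<open>e\<close> exactly in \<open>v\<close>, and for \<open>\<gamma> < 1/(4k)\<close> this has probability at least \<open>\<gamma>/4\<close>, so
  \<open>E |F_I| \<ge> \<alpha>\<gamma>n/8\<close>.

  The rest is a calculation with \<open>R = \<lceil>5r\<rceil>\<close>: the first bound suffices when \<open>\<gamma> \<ge> 1/(4k)\<close>,
  when \<open>k \<le> R\<close>, or when \<open>2(r-1)\<gamma> ln n > 1\<close> (then the loss \<open>\<gamma>^(k-R)\<close> is absorbed by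
  \<open>n^((r-1)/2)\<close>); otherwise \<open>n^((r-1) log\<^sub>2(1+\<gamma>)) \<le> 3\<close> and the second bound suffices.
\<close>

section \<open>Counting subsets and edges\<close>

lemma card_supersets_of_size:
  assumes "finite V" "e \<subseteq> V" "card e = k" "k \<le> s"
  shows "card {I. I \<subseteq> V \<and> card I = s \<and> e \<subseteq> I} = (card V - k) choose (s - k)"
proof -
  have fe: "finite e" using assms finite_subset by blast
  have "bij_betw (\<lambda>I. I - e) {I. I \<subseteq> V \<and> card I = s \<and> e \<subseteq> I} {J. J \<subseteq> V - e \<and> card J = s - k}"
  proof (rule bij_betw_byWitness[where f'="\<lambda>J. J \<union> e"])
    show "(\<lambda>J. J \<union> e) ` {J. J \<subseteq> V - e \<and> card J = s - k} \<subseteq> {I. I \<subseteq> V \<and> card I = s \<and> e \<subseteq> I}"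
    proof (rule image_subsetI, safe)
      fix J assume J: "J \<subseteq> V - e" "card J = s - k"
      then have "finite J" using assms finite_subset by blast
      then have "card (J \<union> e) = card J + k" using J fe assms by (subst card_Un_disjoint) auto
      then show "card (J \<union> e) = s" using J assms by auto
    qed (use assms in auto)
  qed (use assms fe in \<open>auto simp: card_Diff_subset\<close>)
  then have "card {I. I \<subseteq> V \<and> card I = s \<and> e \<subseteq> I} = card (V - e) choose (s - k)"
    using assms by (simp add: bij_betw_same_card n_subsets)
  then show ?thesis using assms fe by (simp add: card_Diff_subset)
qed

lemma card_sets_through_vertex_avoiding_edge:
  assumes "finite V" "e \<subseteq> V" "card e = k" "v \<in> e" "1 \<le> s"
  shows "card {I. I \<subseteq> V \<and> card I = s \<and> v \<in> I \<and> I \<inter> (e - {v}) = {}} = (card V - k) choose (s - 1)"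
proof -
  have "finite e" using assms finite_subset by blast
  moreover have "card e \<le> card V" using assms card_mono by blast
  moreover have "1 \<le> card e" using assms \<open>finite e\<close> by (auto simp: Suc_le_eq card_gt_0_iff)
  ultimately have "card (V - (e - {v})) = card V - k + 1"
    using assms by (subst card_Diff_subset) auto
  moreover have "{I. I \<subseteq> V \<and> card I = s \<and> v \<in> I \<and> I \<inter> (e - {v}) = {}}
      = {I. I \<subseteq> V - (e - {v}) \<and> card I = s \<and> {v} \<subseteq> I}" by auto
  ultimately show ?thesis
    using card_supersets_of_size[of "V - (e - {v})" "{v}" 1 s] assms by auto
qed

lemma sum_card_filter_swap:
  assumes "finite A" "finite B"
  shows "(\<Sum>a\<in>A. card {b \<in> B. R a b}) = (\<Sum>b\<in>B. card {a \<in> A. R a b})"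
  using sum.swap_restrict[OF assms, of "\<lambda>_ _. 1::nat" R] by (simp only: card_eq_sum)

lemma uniform_hypergraph_finite:
  assumes "finite V" "uniform_hypergraph k V F"
  shows "finite F"
  using assms by (meson Pow_iff finite_Pow_iff finite_subset subsetI uniform_hypergraph_def)

lemma uniform_hypergraph_card_le_one:
  assumes "finite V" "uniform_hypergraph 0 V F"
  shows "card F \<le> 1"
proof -
  have "F \<subseteq> {{}}"
    using assms unfolding uniform_hypergraph_def by (metis card_0_eq finite_subset singleton_iff subsetI)
  then show ?thesis using card_mono[of "{{}}" F] by simp
qed

lemma induced_subset_trace: "induced F I \<subseteq> trace F I"
  unfolding induced_def trace_def by (auto simp: Int_absorb2 image_iff)

lemma card_induced_le_card_trace:
  assumes "finite F"
  shows "card (induced F I) \<le> card (trace F I)"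
  using assms by (intro card_mono induced_subset_trace) (simp add: trace_def)

lemma card_induced_le_wp:
  assumes "finite V" "I \<subseteq> V" "card I = m"
  shows "card (induced F I) \<le> wp F V m"
proof -
  have "{card (induced F I) | I. I \<subseteq> V \<and> card I = m} = (\<lambda>I. card (induced F I)) ` {I. I \<subseteq> V \<and> card I = m}"
    by auto
  then have "finite {card (induced F I) | I. I \<subseteq> V \<and> card I = m}" using assms by simp
  then show ?thesis unfolding wp_def using assms by (intro Max_ge) auto
qed

lemma sum_card_induced:
  assumes V: "finite V" and U: "uniform_hypergraph k V F" and "k \<le> s"
  shows "(\<Sum>I\<in>{I. I \<subseteq> V \<and> card I = s}. card (induced F I)) = card F * ((card V - k) choose (s - k))"
proof -
  have "(\<Sum>I\<in>{I. I \<subseteq> V \<and> card I = s}. card (induced F I))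
      = (\<Sum>e\<in>F. card {I \<in> {I. I \<subseteq> V \<and> card I = s}. e \<subseteq> I})"
    unfolding induced_def using uniform_hypergraph_finite[OF V U] V by (intro sum_card_filter_swap) auto
  also have "\<dots> = (\<Sum>e\<in>F. (card V - k) choose (s - k))"
    using U assms card_supersets_of_size[OF V]
    by (intro sum.cong) (auto simp: uniform_hypergraph_def conj_ac)
  finally show ?thesis by simp
qed

lemma sum_card_induced_le_wp:
  assumes V: "finite V" and U: "uniform_hypergraph k V F" and "k \<le> m"
  shows "card F * ((card V - k) choose (m - k)) \<le> wp F V m * (card V choose m)"
proof -
  have "card F * ((card V - k) choose (m - k)) = (\<Sum>I\<in>{I. I \<subseteq> V \<and> card I = m}. card (induced F I))"
    using sum_card_induced[OF V U] assms by simp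
  also have "\<dots> \<le> (\<Sum>I\<in>{I. I \<subseteq> V \<and> card I = m}. wp F V m)"
    by (intro sum_mono card_induced_le_wp[OF V]) auto
  finally show ?thesis using n_subsets[OF V, of m] by (simp add: mult.commute)
qed

lemma sum_card_trace_ge_card_Union:
  assumes V: "finite V" and U: "uniform_hypergraph k V F" and "1 \<le> s"
  shows "card (\<Union>F) * ((card V - k) choose (s - 1))
           \<le> (\<Sum>I\<in>{I. I \<subseteq> V \<and> card I = s}. card (trace F I))"
proof -
  obtain ch where ch: "\<And>v. v \<in> \<Union>F \<Longrightarrow> ch v \<in> F \<and> v \<in> ch v"
    using bchoice[of "\<Union>F" "\<lambda>v e. e \<in> F \<and> v \<in> e"] by blast
  define P where "P I v \<longleftrightarrow> v \<in> I \<and> I \<inter> (ch v - {v}) = {}" for I v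
  have fF: "finite F" using uniform_hypergraph_finite[OF V U] .
  have UV: "\<Union>F \<subseteq> V" using U unfolding uniform_hypergraph_def by auto
  have count: "card {I \<in> {I. I \<subseteq> V \<and> card I = s}. P I v} = (card V - k) choose (s - 1)"
    if "v \<in> \<Union>F" for v
    using card_sets_through_vertex_avoiding_edge[OF V, of "ch v" k v s] ch[OF that] U assms(3)
    unfolding P_def uniform_hypergraph_def by (simp add: conj_ac)
  have singleton: "card {v \<in> \<Union>F. P I v} \<le> card (trace F I)" for I
  proof -
    have "(\<lambda>v. {v}) ` {v \<in> \<Union>F. P I v} \<subseteq> trace F I"
    proof (rule image_subsetI)
      fix v assume v: "v \<in> {v \<in> \<Union>F. P I v}"
      then have "{v} = ch v \<inter> I" using ch unfolding P_def by auto
      then show "{v} \<in> trace F I" unfolding trace_def using ch v by blast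
    qed
    moreover have "finite (trace F I)" using fF by (simp add: trace_def)
    ultimately show ?thesis by (metis card_image card_mono inj_singleton inj_on_subset subset_UNIV)
  qed
  have "card (\<Union>F) * ((card V - k) choose (s - 1))
      = (\<Sum>v\<in>\<Union>F. card {I \<in> {I. I \<subseteq> V \<and> card I = s}. P I v})"
    using count by simp
  also have "\<dots> = (\<Sum>I\<in>{I. I \<subseteq> V \<and> card I = s}. card {v \<in> \<Union>F. P I v})"
    using V UV finite_subset by (intro sum_card_filter_swap[symmetric]) auto
  also have "\<dots> \<le> (\<Sum>I\<in>{I. I \<subseteq> V \<and> card I = s}. card (trace F I))"
    by (intro sum_mono singleton)
  finally show ?thesis .
qed

lemma card_Union_gt_if_wp_le_half:
  assumes V: "finite V" and U: "uniform_hypergraph k V F" and "m \<le> card V" and "F \<noteq> {}"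
    and wp: "real (wp F V m) \<le> real (card F) / 2"
  shows "m < card (\<Union>F)"
proof (rule ccontr)
  assume "\<not> m < card (\<Union>F)"
  moreover have "\<Union>F \<subseteq> V" using U unfolding uniform_hypergraph_def by auto
  ultimately obtain J where J: "\<Union>F \<subseteq> J" "J \<subseteq> V" "card J = m"
    using exists_subset_between[of "\<Union>F" m V] assms by auto
  then have "induced F J = F" unfolding induced_def by auto
  then have "card F \<le> wp F V m" using card_induced_le_wp[OF V J(2,3), of F] by simp
  moreover have "card F > 0" using assms uniform_hypergraph_finite[OF V U] by (simp add: card_gt_0_iff)
  ultimately show False using wp by linarith
qed

section \<open>Binomial estimates\<close>

lemma choose_le_choose_diff_add:
  assumes "1 \<le> b" "j \<le> a"
  shows "a choose b \<le> ((a - j) choose b) + j * ((a - 1) choose (b - 1))"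
  using assms(2)
proof (induction j)
  case (Suc j)
  obtain b' where b': "b = Suc b'" using assms(1) by (cases b) auto
  obtain a' where a': "a - j = Suc a'" "a' = a - Suc j" using Suc.prems by (cases "a - j") auto
  have "(a - j) choose b = (a' choose b') + (a' choose b)" using a' b' by simp
  moreover have "a' choose b' \<le> (a - 1) choose b'" using a' by (intro binomial_right_mono) simp
  ultimately show ?case using Suc b' a' by simp
qed simp

text \<open>With \<open>a = n-1, b = s-1, j = k-1\<close>: since \<open>j C(a-1,b-1) = (j b / a) C(a,b)\<close>, the
  previous bound shows that removing \<open>j\<close> elements loses at most half of the \<open>b\<close>-subsets once \<open>2 j b \<le> a\<close>.\<close>
lemma mult_choose_le_choose_diff:
  assumes "1 \<le> s" "k \<le> n" "1 \<le> k" "2 * (k - 1) * (s - 1) \<le> n - 1"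
  shows "s * (n choose s) \<le> 2 * n * ((n - k) choose (s - 1))"
proof (cases "s = 1")
  case False
  define a b j where "a = n - 1" and "b = s - 1" and "j = k - 1"
  have b1: "1 \<le> b" using False assms unfolding b_def by simp
  have a_j: "a - j = n - k" unfolding a_def j_def using assms by simp
  have pascal: "a choose b \<le> ((a - j) choose b) + j * ((a - 1) choose (b - 1))"
    using assms by (intro choose_le_choose_diff_add b1) (simp add: a_def j_def)
  have absorb: "a * ((a - 1) choose (b - 1)) = b * (a choose b)"
    using times_binomial_minus1_eq[of b a] b1 by simp
  have "2 * a * (a choose b) \<le> 2 * a * ((a - j) choose b) + 2 * j * (a * ((a - 1) choose (b - 1)))"
    using mult_le_mono2[OF pascal, of "2 * a"] by (simp add: algebra_simps)
  also have "\<dots> = 2 * a * ((a - j) choose b) + (2 * j * b) * (a choose b)"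
    by (metis absorb mult.assoc)
  also have "\<dots> \<le> 2 * a * ((a - j) choose b) + a * (a choose b)"
    using assms unfolding a_def b_def j_def by (intro add_left_mono mult_le_mono1) simp
  finally have "a * (a choose b) \<le> a * (2 * ((a - j) choose b))" by simp
  then have "a choose b \<le> 2 * ((a - j) choose b)" using b1 by (cases "a = 0") auto
  moreover have "s * (n choose s) = n * (a choose b)"
    using times_binomial_minus1_eq[of s n] assms unfolding a_def b_def by simp
  ultimately show ?thesis using a_j unfolding b_def by simp
qed simp

lemma power_le_choose_ratio:
  assumes "k \<le> s" "s \<le> n" "0 < n"
  shows "(real s / (real k * real n)) ^ k \<le> real ((n - k) choose (s - k)) / real (n choose s)"
proof -
  have "real (n choose s) * real (s choose k) = real (n choose k) * real ((n - k) choose (s - k))"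
    using choose_mult[OF assms(1,2)] by (metis of_nat_mult)
  moreover have "0 < real (n choose s)" "0 < real (n choose k)" using assms by simp_all
  ultimately have ratio: "real ((n - k) choose (s - k)) / real (n choose s) = real (s choose k) / real (n choose k)"
    by (simp add: field_simps)
  have "real (n choose k) \<le> real n ^ k"
    using binomial_le_pow[of k n] assms by (metis le_trans of_nat_le_iff of_nat_power)
  have "(real s / (real k * real n)) ^ k = (real s / real k) ^ k / real n ^ k"
    by (simp add: power_divide power_mult_distrib)
  also have "\<dots> \<le> real (s choose k) / real n ^ k"
    using binomial_ge_n_over_k_pow_k[OF assms(1)] by (intro divide_right_mono) auto
  also have "\<dots> \<le> real (s choose k) / real (n choose k)"
    using \<open>real (n choose k) \<le> real n ^ k\<close> \<open>0 < real (n choose k)\<close> assms(3)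
    by (intro divide_left_mono) auto
  finally show ?thesis using ratio by simp
qed

section \<open>Lower bounds for the expected trace\<close>

lemma expected_trace_eq_sum:
  assumes "finite V"
  shows "expected_trace F V s
           = real (\<Sum>I\<in>{I. I \<subseteq> V \<and> card I = s}. card (trace F I)) / real (card V choose s)"
  unfolding expected_trace_def using n_subsets[OF assms] by simp

lemma expected_trace_ge_edge_density:
  assumes V: "finite V" and U: "uniform_hypergraph k V F" and "k \<le> s" "s \<le> card V" "0 < card V"
  shows "real (card F) * (real s / (real k * real (card V))) ^ k \<le> expected_trace F V s"
proof -
  have "card F * ((card V - k) choose (s - k)) \<le> (\<Sum>I\<in>{I. I \<subseteq> V \<and> card I = s}. card (trace F I))"
    unfolding sum_card_induced[OF V U \<open>k \<le> s\<close>, symmetric]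
    by (intro sum_mono card_induced_le_card_trace uniform_hypergraph_finite[OF V U])
  then have "real (card F * ((card V - k) choose (s - k))) / real (card V choose s)
      \<le> expected_trace F V s"
    unfolding expected_trace_eq_sum[OF V] by (intro divide_right_mono of_nat_mono) simp_all
  then have "real (card F) * (real ((card V - k) choose (s - k)) / real (card V choose s))
      \<le> expected_trace F V s" by simp
  moreover have "(real s / (real k * real (card V))) ^ k
      \<le> real ((card V - k) choose (s - k)) / real (card V choose s)"
    using assms by (intro power_le_choose_ratio)
  ultimately show ?thesis by (meson mult_left_mono of_nat_0_le_iff order_trans)
qed

lemma wp_ge_edge_density:
  assumes V: "finite V" and U: "uniform_hypergraph k V F" and "k \<le> m" "m \<le> card V" "0 < card V"
  shows "real (card F) * (real m / (real k * real (card V))) ^ k \<le> real (wp F V m)"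
proof -
  have "real (card F) * (real ((card V - k) choose (m - k)) / real (card V choose m)) \<le> real (wp F V m)"
    using sum_card_induced_le_wp[OF V U \<open>k \<le> m\<close>] assms
    by (simp add: field_simps flip: of_nat_mult)
  moreover have "(real m / (real k * real (card V))) ^ k
      \<le> real ((card V - k) choose (m - k)) / real (card V choose m)"
    using assms by (intro power_le_choose_ratio)
  ultimately show ?thesis by (meson mult_left_mono of_nat_0_le_iff order_trans)
qed

lemma expected_trace_ge_card_Union:
  assumes V: "finite V" and U: "uniform_hypergraph k V F"
    and "1 \<le> s" "s \<le> card V" "1 \<le> k" "k \<le> card V" "2 * (k - 1) * (s - 1) \<le> card V - 1"
  shows "real (card (\<Union>F)) * real s / (2 * real (card V)) \<le> expected_trace F V s"
proof -
  have "real (card (\<Union>F)) * (real ((card V - k) choose (s - 1)) / real (card V choose s))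
      \<le> expected_trace F V s"
    using divide_right_mono[OF of_nat_mono[OF sum_card_trace_ge_card_Union[OF V U \<open>1 \<le> s\<close>]],
        of "real (card V choose s)"]
    unfolding expected_trace_eq_sum[OF V] by simp
  moreover have "real s / (2 * real (card V)) \<le> real ((card V - k) choose (s - 1)) / real (card V choose s)"
  proof -
    have "real s * real (card V choose s) \<le> 2 * real (card V) * real ((card V - k) choose (s - 1))"
      using mult_choose_le_choose_diff[of s k "card V"] assms
      by (metis of_nat_le_iff of_nat_mult of_nat_numeral)
    then show ?thesis using assms by (simp add: field_simps)
  qed
  ultimately show ?thesis by (smt (verit) mult_left_mono of_nat_0_le_iff times_divide_eq_right)
qed

lemma expected_trace_ge_of_wp_le_half:
  assumes V: "finite V" and U: "uniform_hypergraph k V F" and "F \<noteq> {}"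
    and "m \<le> card V" "real (wp F V m) \<le> real (card F) / 2"
    and "1 \<le> s" "s \<le> card V" "1 \<le> k" "2 * (k - 1) * (s - 1) \<le> card V - 1"
  shows "real m * real s / (2 * real (card V)) \<le> expected_trace F V s"
proof -
  obtain e where "e \<in> F" using \<open>F \<noteq> {}\<close> by blast
  then have "k \<le> card V" using U V card_mono unfolding uniform_hypergraph_def by metis
  then have "real (card (\<Union>F)) * real s / (2 * real (card V)) \<le> expected_trace F V s"
    using expected_trace_ge_card_Union[OF V U] assms by simp
  moreover have "m \<le> card (\<Union>F)"
    using card_Union_gt_if_wp_le_half[OF V U] assms by fastforce
  ultimately show ?thesis
    by (smt (verit) divide_right_mono mult_right_mono of_nat_0_le_iff of_nat_mono)
qed

section \<open>The analytic estimate\<close>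

lemma log2_one_plus_le:
  fixes g :: real
  assumes "0 \<le> g"
  shows "log 2 (1 + g) \<le> 2 * g"
proof -
  have "ln (1/2::real) \<le> 1/2 - 1" by (rule ln_le_minus_one) simp
  then have ln2: "1/2 \<le> ln (2::real)" by (simp add: ln_div)
  have "ln (1 + g) \<le> g" using ln_le_minus_one[of "1 + g"] assms by simp
  also have "\<dots> \<le> 2 * g * ln 2" using mult_left_mono[OF ln2, of "2 * g"] assms by simp
  finally show ?thesis unfolding log_def using ln2 by (simp add: divide_le_eq)
qed

lemma power_le_power_mult_powr:
  fixes r x \<gamma> :: real and d :: nat
  assumes "1 \<le> d" "1 < r" "1 \<le> x" "0 < \<gamma>" "1 < 2 * (r - 1) * \<gamma> * ln x"
  shows "(1 / (4 * real d)) ^ d \<le> \<gamma> ^ d * x powr ((r - 1) / 2)"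
proof -
  define a where "a = (r - 1) / (2 * d)"
  have "0 < a" unfolding a_def using assms by simp
  then have "2 * (r - 1) * \<gamma> * ln x \<le> 2 * (r - 1) * \<gamma> * (x powr a / a)"
    using ln_powr_bound[OF \<open>1 \<le> x\<close>] assms by (intro mult_left_mono) auto
  also have "\<dots> = 4 * d * (\<gamma> * x powr a)" unfolding a_def using assms by (simp add: field_simps)
  finally have "1 / (4 * real d) \<le> \<gamma> * x powr a" using assms by (simp add: field_simps)
  then have "(1 / (4 * real d)) ^ d \<le> (\<gamma> * x powr a) ^ d" by (intro power_mono) auto
  also have "\<dots> = \<gamma> ^ d * x powr ((r - 1) / 2)"
    unfolding a_def power_mult_distrib using assms by (simp add: powr_realpow[symmetric] powr_powr)
  finally show ?thesis .
qed

lemma gamma_power_dichotomy: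
  fixes r x \<gamma> :: real and k R :: nat
  assumes "1 \<le> k" "1 \<le> R" "1 \<le> r" "1 \<le> x" "0 < \<gamma>" "\<gamma> \<le> 1"
  shows "(1 / (4 * real k)) ^ k \<le> \<gamma> ^ k / \<gamma> ^ R * x powr ((r - 1) * (1 - log 2 (1 + \<gamma>)))
    \<or> (\<gamma> < 1 / (4 * real k) \<and> x powr ((r - 1) * log 2 (1 + \<gamma>)) \<le> 3)"
proof -
  define T where "T = x powr ((r - 1) * (1 - log 2 (1 + \<gamma>)))"
  have log_le: "log 2 (1 + \<gamma>) \<le> 2 * \<gamma>" using log2_one_plus_le assms by simp
  have "1 \<le> T" unfolding T_def using assms by (intro ge_one_powr_ge_zero) auto
  then have le_mult_T: "y \<le> y * T" if "0 \<le> y" for y using mult_left_mono[OF _ that] by fastforce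
  have gR: "0 < \<gamma> ^ R" "\<gamma> ^ R \<le> 1" using assms by (auto intro: power_le_one)
  consider "1 / (4 * real k) \<le> \<gamma>" | "k \<le> R"
    | "\<gamma> < 1 / (4 * real k)" "R < k" "2 * (r - 1) * \<gamma> * ln x \<le> 1"
    | "\<gamma> < 1 / (4 * real k)" "R < k" "1 < 2 * (r - 1) * \<gamma> * ln x"
    by linarith
  then show ?thesis
  proof cases
    case 1
    have "(1 / (4 * real k)) ^ k \<le> \<gamma> ^ k" using 1 assms by (intro power_mono) auto
    also have "\<dots> \<le> \<gamma> ^ k / \<gamma> ^ R" using gR assms by (simp add: le_divide_eq mult_left_le)
    also have "\<dots> \<le> \<gamma> ^ k / \<gamma> ^ R * T" using gR assms by (intro le_mult_T) simp
    finally show ?thesis unfolding T_def by blast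
  next
    case 2
    have "(1 / (4 * real k)) ^ k \<le> 1" using assms by (intro power_le_one) auto
    also have "\<dots> \<le> \<gamma> ^ k / \<gamma> ^ R" using power_decreasing[OF 2, of \<gamma>] gR assms by simp
    also have "\<dots> \<le> \<gamma> ^ k / \<gamma> ^ R * T" using gR assms by (intro le_mult_T) simp
    finally show ?thesis unfolding T_def by blast
  next
    case 3
    have "(r - 1) * log 2 (1 + \<gamma>) * ln x \<le> (r - 1) * (2 * \<gamma>) * ln x"
      using log_le assms by (intro mult_right_mono mult_left_mono) auto
    then have "x powr ((r - 1) * log 2 (1 + \<gamma>)) \<le> exp 1"
      using 3 assms by (simp add: powr_def mult_ac)
    then show ?thesis using 3 exp_le by fastforce
  next
    case 4
    define d where "d = k - R"
    have "1 < r" using 4 assms by (cases "r = 1") auto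
    have "4 * \<gamma> \<le> 4 * \<gamma> * real k" using assms mult_left_mono[of 1 "real k" "4 * \<gamma>"] by simp
    then have "2 * \<gamma> \<le> 1 / 2" using 4 by (simp add: field_simps)
    then have "(r - 1) / 2 \<le> (r - 1) * (1 - log 2 (1 + \<gamma>))"
      using mult_left_mono[of "1 / 2" "1 - log 2 (1 + \<gamma>)" "r - 1"] log_le assms by simp
    then have "x powr ((r - 1) / 2) \<le> T" unfolding T_def using assms by (intro powr_mono) auto
    have "(1 / (4 * real k)) ^ k \<le> (1 / (4 * real d)) ^ k"
      using 4 unfolding d_def by (intro power_mono divide_left_mono) auto
    also have "\<dots> \<le> (1 / (4 * real d)) ^ d"
      using 4 unfolding d_def by (intro power_decreasing) auto
    also have "\<dots> \<le> \<gamma> ^ d * x powr ((r - 1) / 2)"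
      using 4 assms \<open>1 < r\<close> unfolding d_def by (intro power_le_power_mult_powr) auto
    also have "\<dots> \<le> \<gamma> ^ d * T"
      using \<open>x powr ((r - 1) / 2) \<le> T\<close> assms by (intro mult_left_mono) auto
    also have "\<gamma> ^ d = \<gamma> ^ k / \<gamma> ^ R" using 4 assms unfolding d_def by (simp add: power_diff)
    finally show ?thesis unfolding T_def by blast
  qed
qed

lemma powr_diff_mult_le_powr:
  fixes x q r e B :: real
  assumes "1 \<le> x" "0 < q" "q \<le> 1" "0 \<le> e" "e \<le> 1" "x powr r * q \<le> B * x"
  shows "x powr ((r - 1) * e) * q \<le> B powr e"
proof -
  have "x powr (r - 1) * q \<le> B"
    using assms by (simp add: powr_diff field_simps)
  then have "(x powr (r - 1) * q) powr e \<le> B powr e"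
    using assms by (intro powr_mono2) auto
  moreover have "(x powr (r - 1) * q) powr e = x powr ((r - 1) * e) * q powr e"
    using assms by (simp add: powr_mult powr_powr)
  moreover have "q \<le> q powr e" using powr_mono'[of e 1 q] assms by simp
  ultimately show ?thesis by (smt (verit) mult_left_mono powr_ge_zero)
qed

lemma lower_bound_of_estimates:
  fixes k R :: nat and r x \<alpha> \<gamma> B E L :: real
  defines "q \<equiv> (\<alpha> / (2 * real k)) ^ k"
  assumes k: "1 \<le> k" and R: "1 \<le> R" and r: "1 \<le> r" and x: "1 \<le> x"
    and "0 < \<alpha>" and \<gamma>: "0 < \<gamma>" "\<gamma> \<le> 1" and "0 < B"
    and L_edges: "(4 * real k) ^ k \<le> (8 * real k / \<alpha>) ^ R / (2 * real k) ^ k * q * L"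
    and L_vertices: "3 \<le> \<alpha> / 8 * (8 * real k / \<alpha>) ^ R * q * L"
    and E_edges: "x powr r * (\<gamma> / (2 * real k)) ^ k \<le> E"
    and E_vertices: "\<gamma> < 1 / (4 * real k) \<Longrightarrow> \<alpha> * \<gamma> * x / 8 \<le> E"
    and B: "x powr ((r - 1) * (1 - log 2 (1 + \<gamma>))) * q \<le> B powr (1 - log 2 (1 + \<gamma>))"
  shows "1 / ((8 * real k / (\<alpha> * \<gamma>)) ^ R * L) * (x powr r / B powr (1 - log 2 (1 + \<gamma>))) \<le> E"
proof -
  define T where "T = x powr ((r - 1) * (1 - log 2 (1 + \<gamma>)))"
  define D where "D = (8 * real k / (\<alpha> * \<gamma>)) ^ R * L * (T * q)"
  have pos: "0 < q" "0 < T" "0 < L"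
    using assms L_vertices zero_less_mult_pos[of "\<alpha> / 8 * (8 * real k / \<alpha>) ^ R * q" L]
    by (auto simp: T_def)
  then have "0 < D" unfolding D_def using assms by simp
  have "1 / ((8 * real k / (\<alpha> * \<gamma>)) ^ R * L) * (x powr r / B powr (1 - log 2 (1 + \<gamma>)))
      \<le> x powr r / D"
    unfolding D_def T_def using B pos assms by (simp add: field_simps frac_le)
  also have "x powr r / D \<le> E"
    using gamma_power_dichotomy[OF k R r x \<gamma>]
  proof (elim disjE conjE)
    assume "(1 / (4 * real k)) ^ k \<le> \<gamma> ^ k / \<gamma> ^ R * x powr ((r - 1) * (1 - log 2 (1 + \<gamma>)))"
    then have "1 \<le> (4 * real k) ^ k * (\<gamma> ^ k / \<gamma> ^ R * T)"
      unfolding T_def using assms by (simp add: power_divide field_simps)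
    also have "\<dots> \<le> (8 * real k / \<alpha>) ^ R / (2 * real k) ^ k * q * L * (\<gamma> ^ k / \<gamma> ^ R * T)"
      using L_edges pos assms by (intro mult_right_mono) auto
    also have "\<dots> = (\<gamma> / (2 * real k)) ^ k * D"
      unfolding D_def using assms by (simp add: power_divide power_mult_distrib field_simps)
    finally have "x powr r \<le> x powr r * ((\<gamma> / (2 * real k)) ^ k * D)"
      using mult_left_mono[of 1 _ "x powr r"] by simp
    then have "x powr r / D \<le> x powr r * (\<gamma> / (2 * real k)) ^ k"
      using \<open>0 < D\<close> by (simp add: divide_le_eq mult.assoc)
    then show ?thesis using E_edges by linarith
  next
    assume small: "\<gamma> < 1 / (4 * real k)" and "x powr ((r - 1) * log 2 (1 + \<gamma>)) \<le> 3"
    have "x powr r = x powr ((r - 1) * log 2 (1 + \<gamma>)) * (x * T)"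
      unfolding T_def using assms by (simp add: powr_add[symmetric] algebra_simps powr_mult_base)
    also have "\<dots> \<le> 3 * (x * T)"
      using \<open>x powr ((r - 1) * log 2 (1 + \<gamma>)) \<le> 3\<close> pos assms by (intro mult_right_mono) auto
    also have "\<dots> \<le> \<alpha> / 8 * (8 * real k / \<alpha>) ^ R * q * L * (x * T)"
      using L_vertices pos assms by (intro mult_right_mono) auto
    also have "\<dots> \<le> \<alpha> / 8 * (8 * real k / \<alpha>) ^ R * q * L * (x * T) * (\<gamma> / \<gamma> ^ R)"
      using pos assms power_decreasing[of 1 R \<gamma>] by (simp add: field_simps)
    also have "\<dots> = \<alpha> * \<gamma> * x / 8 * D"
      unfolding D_def using assms by (simp add: power_divide power_mult_distrib field_simps)
    finally have "x powr r / D \<le> \<alpha> * \<gamma> * x / 8"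
      using \<open>0 < D\<close> by (simp add: divide_le_eq)
    then show ?thesis using E_vertices small by linarith
  qed
  finally show ?thesis .
qed

section \<open>Rounding and large \<open>n\<close>\<close>

lemma rnd_scaled_bounds:
  fixes c :: real and k n :: nat
  assumes "0 \<le> c" "c \<le> 1" "real k \<le> c * real n" "1 \<le> c * real n"
  shows "k \<le> rnd (c * n)" "rnd (c * n) \<le> n"
    "c * n / 2 \<le> real (rnd (c * n))" "real (rnd (c * n)) \<le> c * n + 1 / 2"
proof -
  have "c * n \<le> real n" using assms mult_right_mono[of c 1 "real n"] by simp
  then have "round (real k) \<le> round (c * n)" "round (c * n) \<le> round (real n)"
    using assms by (metis round_mono)+
  then show "k \<le> rnd (c * n)" "rnd (c * n) \<le> n" unfolding rnd_def by auto
  have "real (rnd (c * n)) = real_of_int (round (c * n))"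
    using \<open>round (real k) \<le> round (c * n)\<close> unfolding rnd_def by simp
  then show "c * n / 2 \<le> real (rnd (c * n))" "real (rnd (c * n)) \<le> c * n + 1 / 2"
    using of_int_round_ge[of "c * n"] of_int_round_le[of "c * n"] assms by simp_all
qed

lemma two_mult_pred_le_pred:
  fixes k s n :: nat and \<gamma> :: real
  assumes "1 \<le> k" "1 \<le> s" "4 \<le> n" "0 < \<gamma>" "real s \<le> \<gamma> * n + 1 / 2" "\<gamma> < 1 / (4 * real k)"
  shows "2 * (k - 1) * (s - 1) \<le> n - 1"
proof -
  have "real (2 * (k - 1) * (s - 1)) \<le> 2 * real k * (\<gamma> * n)"
    using assms by (auto simp: of_nat_diff intro!: mult_mono)
  also have "\<dots> = (4 * real k * \<gamma>) * n / 2" by simp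
  also have "\<dots> \<le> real n / 2"
    using mult_right_mono[of "4 * real k * \<gamma>" 1 "real n"] assms by (simp add: field_simps)
  also have "\<dots> \<le> real (n - 1)" using assms by (simp add: of_nat_diff)
  finally show ?thesis by linarith
qed

lemma expected_trace_lower_bound:
  fixes V :: "'a set" and F :: "'a set set" and k R n :: nat and r \<alpha> \<gamma> B :: real
  defines "q \<equiv> (\<alpha> / (2 * real k)) ^ k"
  assumes V: "finite V" "card V = n" and U: "uniform_hypergraph k V F"
    and F: "real (card F) = real n powr r"
    and R: "1 \<le> R" and r: "1 \<le> r" and \<alpha>: "0 < \<alpha>" "\<alpha> \<le> 1" and \<gamma>: "0 < \<gamma>" "\<gamma> \<le> 1"
    and B: "0 < B" and wp: "real (wp F V (rnd (\<alpha> * n))) \<le> min (B * n) (real (card F) / 2)"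
    and k_sqrt: "real k \<le> sqrt (\<gamma> * n)"
    and n: "4 \<le> n" "real k + 1 \<le> \<alpha> * n"
    and L_edges: "(4 * real k) ^ k / ((8 * real k / \<alpha>) ^ R / (2 * real k) ^ k * q) \<le> log 2 n"
    and L_vertices: "3 / (\<alpha> / 8 * (8 * real k / \<alpha>) ^ R * q) \<le> log 2 n"
  shows "1 / ((8 * real k / (\<alpha> * \<gamma>)) ^ R * log 2 n) * (real (card F) / B powr (1 - log 2 (1 + \<gamma>)))
    \<le> expected_trace F V (rnd (\<gamma> * n))"
proof -
  define s m where "s = rnd (\<gamma> * n)" and "m = rnd (\<alpha> * n)"
  have "real n powr 1 \<le> real n powr r" using r n by (intro powr_mono) auto
  then have n_le_F: "real n \<le> real (card F)" using F n by simp
  then have "F \<noteq> {}" using n by auto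
  have k: "1 \<le> k" using uniform_hypergraph_card_le_one[OF V(1), of F] U n_le_F n
    by (cases k) auto
  have q: "0 < q" "q \<le> 1"
    unfolding q_def using \<alpha> k by (simp, intro power_le_one) (auto simp: field_simps)
  have "real k * 1 \<le> real k * real k" using k by (intro mult_left_mono) auto
  also have "\<dots> \<le> (sqrt (\<gamma> * n)) ^ 2"
    using k_sqrt power_mono[OF k_sqrt, of 2] by (simp add: power2_eq_square)
  also have "\<dots> = \<gamma> * n" using \<gamma> by simp
  finally have k_le: "real k \<le> \<gamma> * n" by simp
  note s_bounds = rnd_scaled_bounds[of \<gamma> k n, folded s_def]
  note m_bounds = rnd_scaled_bounds[of \<alpha> k n, folded m_def]
  have s: "k \<le> s" "s \<le> n" "\<gamma> * n / 2 \<le> real s" "real s \<le> \<gamma> * n + 1 / 2"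
    using s_bounds k k_le \<gamma> by auto
  have m: "k \<le> m" "m \<le> n" "\<alpha> * n / 2 \<le> real m"
    using m_bounds n \<alpha> by auto
  have E_edges: "real n powr r * (\<gamma> / (2 * real k)) ^ k \<le> expected_trace F V s"
  proof -
    have "(\<gamma> / (2 * real k)) ^ k \<le> (real s / (real k * real n)) ^ k"
      using s \<gamma> k n by (intro power_mono) (auto simp: field_simps)
    then have "real n powr r * (\<gamma> / (2 * real k)) ^ k \<le> real n powr r * (real s / (real k * real n)) ^ k"
      by (intro mult_left_mono) auto
    also have "\<dots> \<le> expected_trace F V s"
      using expected_trace_ge_edge_density[OF V(1) U s(1)] s(2) n unfolding F V(2) by simp
    finally show ?thesis .
  qed
  have E_vertices: "\<alpha> * \<gamma> * n / 8 \<le> expected_trace F V s" if "\<gamma> < 1 / (4 * real k)"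
  proof -
    have "2 * (k - 1) * (s - 1) \<le> n - 1"
      using two_mult_pred_le_pred[of k s n \<gamma>] s k n \<gamma> that by simp
    then have "real m * real s / (2 * real n) \<le> expected_trace F V s"
      using expected_trace_ge_of_wp_le_half[OF V(1) U \<open>F \<noteq> {}\<close>] wp s m k V(2)
      unfolding m_def by simp
    moreover have "(\<alpha> * n / 2) * (\<gamma> * n / 2) \<le> real m * real s"
      using s m \<alpha> \<gamma> by (intro mult_mono) auto
    then have "\<alpha> * \<gamma> * n / 8 \<le> real m * real s / (2 * real n)"
      using n by (simp add: field_simps)
    ultimately show ?thesis by linarith
  qed
  have "real n powr r * q \<le> real (wp F V m)"
  proof -
    have "q \<le> (real m / (real k * real n)) ^ k"
      unfolding q_def using m \<alpha> k n by (intro power_mono) (auto simp: field_simps)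
    then have "real n powr r * q \<le> real n powr r * (real m / (real k * real n)) ^ k"
      by (intro mult_left_mono) auto
    also have "\<dots> \<le> real (wp F V m)"
      using wp_ge_edge_density[OF V(1) U m(1)] m(2) n unfolding F V(2) by simp
    finally show ?thesis .
  qed
  then have B_bound: "real n powr ((r - 1) * (1 - log 2 (1 + \<gamma>))) * q \<le> B powr (1 - log 2 (1 + \<gamma>))"
    using wp q \<gamma> n unfolding m_def by (intro powr_diff_mult_le_powr) auto
  have "0 < (8 * real k / \<alpha>) ^ R / (2 * real k) ^ k * q" "0 < \<alpha> / 8 * (8 * real k / \<alpha>) ^ R * q"
    using k \<alpha> q by simp_all
  then have "(4 * real k) ^ k \<le> (8 * real k / \<alpha>) ^ R / (2 * real k) ^ k * q * log 2 n"
    "3 \<le> \<alpha> / 8 * (8 * real k / \<alpha>) ^ R * q * log 2 n"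
    using L_edges L_vertices by (metis pos_divide_le_eq mult.commute)+
  from lower_bound_of_estimates[OF k R r _ \<alpha>(1) \<gamma> B this[unfolded q_def] E_edges E_vertices
      B_bound[unfolded q_def]]
  show ?thesis using n unfolding F s_def by simp
qed

theorem corollary2p8:
  fixes k :: nat and r \<alpha> :: real
  assumes "r \<ge> 1" and "0 < \<alpha>" and "\<alpha> \<le> 1"
  shows "\<exists>N::nat. \<forall>n \<ge> N. \<forall>(V :: nat set) (F :: nat set set) (B :: real) (\<gamma> :: real).
     finite V \<longrightarrow> card V = n \<longrightarrow> uniform_hypergraph k V F \<longrightarrow>
     real (card F) = real n powr r \<longrightarrow>
     B > 0 \<longrightarrow>
     real (wp F V (rnd (\<alpha> * n))) \<le> min (B * n) (real (card F) / 2) \<longrightarrow>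
     0 < \<gamma> \<longrightarrow> \<gamma> \<le> 1 \<longrightarrow> real k \<le> sqrt (\<gamma> * n) \<longrightarrow>
     expected_trace F V (rnd (\<gamma> * n)) \<ge>
       (1 / ((8 * k / (\<alpha> * \<gamma>)) ^ nat \<lceil>5 * r\<rceil> * log 2 n))
         * (real (card F) / B powr (1 - log 2 (1 + \<gamma>)))"
proof -
  define R where "R = nat \<lceil>5 * r\<rceil>"
  define q where "q = (\<alpha> / (2 * real k)) ^ k"
  define M where "M = max ((4 * real k) ^ k / ((8 * real k / \<alpha>) ^ R / (2 * real k) ^ k * q))
    (3 / (\<alpha> / 8 * (8 * real k / \<alpha>) ^ R * q))"
  define N where "N = nat \<lceil>max (2 powr M) (4 + (real k + 1) / \<alpha>)\<rceil>"
  have "1 \<le> R" unfolding R_def using assms by linarith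
  have large: "4 \<le> n" "real k + 1 \<le> \<alpha> * n" "M \<le> log 2 n" if "N \<le> n" for n
  proof -
    have n: "2 powr M \<le> n" "4 + (real k + 1) / \<alpha> \<le> n" using that unfolding N_def by linarith+
    moreover have "0 \<le> (real k + 1) / \<alpha>" using assms by simp
    ultimately have "4 \<le> real n" "(real k + 1) / \<alpha> \<le> n" by linarith+
    then show "4 \<le> n" "real k + 1 \<le> \<alpha> * n" using assms by (simp_all add: pos_divide_le_eq mult.commute)
    then show "M \<le> log 2 n" using n by (simp add: le_log_iff)
  qed
  show ?thesis
    unfolding of_nat_mult of_nat_numeral
    by (intro exI[of _ N] allI impI, rule expected_trace_lower_bound)
      (use assms \<open>1 \<le> R\<close> large in \<open>auto simp: M_def q_def R_def\<close>)
qed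

end
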